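(* Let $G$ be a graph with at least one vertex that has property $\mathsf{R}$. Then for every feedback vertex set $X$ of $G$, strictly more than $\frac{|E(G)|}{5}$ edges of $G$ have at least one endpoint in $X$.
   Context: A graph $G$ has property $\mathsf{R}$ if its minimum degree is at least $2$ and no two adjacent vertices of $G$ both have degree exactly $2$. A feedback vertex set of $G$ is a set $X\subseteq V(G)$ such that $G-X$ is a forest. *)

theory Defs
  imports Complex_Main
begin

definition graph :: "'a set \<Rightarrow> 'a set set \<Rightarrow> bool" where
  "graph V E \<longleftrightarrow> finite V \<and> (\<forall>e\<in>E. e \<subseteq> V \<and> card e = 2)"

definition degree :: "'a set set \<Rightarrow> 'a \<Rightarrow> nat" where
  "degree E v = card {e\<in>E. v \<in> e}"

definition propR :: "'a set \<Rightarrow> 'a set set \<Rightarrow> bool" where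
  "propR V E \<longleftrightarrow> (\<forall>v\<in>V. degree E v \<ge> 2) \<and>
     (\<forall>u\<in>V. \<forall>v\<in>V. {u, v} \<in> E \<longrightarrow> \<not> (degree E u = 2 \<and> degree E v = 2))"

definition del_vertices :: "'a set set \<Rightarrow> 'a set \<Rightarrow> 'a set set" where
  "del_vertices E X = {e\<in>E. e \<inter> X = {}}"

definition is_cycle :: "'a set \<Rightarrow> 'a set set \<Rightarrow> 'a list \<Rightarrow> bool" where
  "is_cycle V E cs \<longleftrightarrow> length cs \<ge> 3 \<and> distinct cs \<and> set cs \<subseteq> V \<and>
     (\<forall>i < length cs - 1. {cs ! i, cs ! (i+1)} \<in> E) \<and> {last cs, hd cs} \<in> E"

definition forest :: "'a set \<Rightarrow> 'a set set \<Rightarrow> bool" where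
  "forest V E \<longleftrightarrow> \<not> (\<exists>cs. is_cycle V E cs)"

definition feedback_vertex_set :: "'a set \<Rightarrow> 'a set set \<Rightarrow> 'a set \<Rightarrow> bool" where
  "feedback_vertex_set V E X \<longleftrightarrow> X \<subseteq> V \<and> forest (V - X) (del_vertices E X)"

end

theory Submission
  imports Defs
begin

text \<open>
  Let \<open>F = G - X\<close> be the forest, \<open>C\<close> the set of edges meeting \<open>X\<close>, and \<open>T\<close> the set of vertices
  of degree 2 in both \<open>G\<close> and \<open>F\<close>. Charging every vertex \<open>v\<close> of \<open>F\<close> with
  \<open>4 deg\<^sub>C v + 2 deg\<^sub>F v + 2 [v \<in> T] \<ge> 6\<close> (here minimum degree 2 is used) and summing gives
  \<open>6 |V(F)| \<le> 4 |C| + 4 |E(F)| + 2 |T|\<close>, since each edge of \<open>C\<close> has at most one end in \<open>F\<close>.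
  By property R the set \<open>T\<close> is independent, so the edges of \<open>F\<close> at \<open>T\<close> form a forest with exactly
  \<open>2 |T|\<close> edges, whence \<open>2 |T| < |V(F)|\<close>. Together with \<open>|E(F)| < |V(F)|\<close> this yields
  \<open>|E(F)| < 4 |C|\<close>, i.e. \<open>|E(G)| < 5 |C|\<close>.
\<close>

lemma graph_finite_edges: "graph V E \<Longrightarrow> finite E"
  unfolding graph_def by (meson PowI finite_Pow_iff finite_subset subsetI)

lemma graph_edgeE:
  assumes "graph V E" "e \<in> E"
  obtains a b where "e = {a, b}" "a \<noteq> b" "a \<in> V" "b \<in> V"
  using assms unfolding graph_def by (metis card_2_iff insert_subset)

lemma graph_subset_edges: "graph V E \<Longrightarrow> E' \<subseteq> E \<Longrightarrow> graph V E'"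
  unfolding graph_def by blast

lemma graph_del_vertices: "graph V E \<Longrightarrow> graph (V - X) (del_vertices E X)"
  unfolding graph_def del_vertices_def by blast

lemma is_cycle_mono: "is_cycle V E cs \<Longrightarrow> V \<subseteq> V' \<Longrightarrow> E \<subseteq> E' \<Longrightarrow> is_cycle V' E' cs"
  unfolding is_cycle_def by blast

lemma forest_subset_edges: "forest V E \<Longrightarrow> E' \<subseteq> E \<Longrightarrow> forest V E'"
  unfolding forest_def using is_cycle_mono by blast

lemma forest_del_vertices: "forest V E \<Longrightarrow> forest (V - X) (del_vertices E X)"
  unfolding forest_def del_vertices_def using is_cycle_mono[of "V - X" _ _ V E] by blast

lemma card_del_vertices_add:
  assumes "finite E"
  shows "card (del_vertices E X) + card {e\<in>E. e \<inter> X \<noteq> {}} = card E"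
proof -
  have "E = del_vertices E X \<union> {e\<in>E. e \<inter> X \<noteq> {}}"
    and "del_vertices E X \<inter> {e\<in>E. e \<inter> X \<noteq> {}} = {}"
    unfolding del_vertices_def by auto
  then show ?thesis
    using assms card_Un_disjoint[of "del_vertices E X" "{e\<in>E. e \<inter> X \<noteq> {}}"]
    by (metis (no_types, lifting) finite_Un)
qed

lemma degree_del_vertices_add:
  assumes "finite E"
  shows "degree (del_vertices E X) v + degree {e\<in>E. e \<inter> X \<noteq> {}} v = degree E v"
proof -
  have "del_vertices {e\<in>E. v \<in> e} X = {e \<in> del_vertices E X. v \<in> e}"
    and "{e\<in>{e\<in>E. v \<in> e}. e \<inter> X \<noteq> {}} = {e\<in>{e\<in>E. e \<inter> X \<noteq> {}}. v \<in> e}"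
    unfolding del_vertices_def by auto
  then show ?thesis
    using card_del_vertices_add[of "{e\<in>E. v \<in> e}" X] assms by (simp add: degree_def)
qed

lemma sum_degree_eq_sum_card_Int:
  assumes "finite A" "finite E"
  shows "(\<Sum>v\<in>A. degree E v) = (\<Sum>e\<in>E. card (e \<inter> A))"
proof -
  have "degree E v = (\<Sum>e\<in>E. if v \<in> e then 1 else 0)" for v
    using sum.inter_filter[OF assms(2), of "\<lambda>_. 1::nat"] by (simp add: degree_def)
  moreover have "card (e \<inter> A) = (\<Sum>v\<in>A. if v \<in> e then 1 else 0)" for e
  proof -
    have "e \<inter> A = {v\<in>A. v \<in> e}" by blast
    then show ?thesis using sum.inter_filter[OF assms(1), of "\<lambda>_. 1::nat"] by simp
  qed
  ultimately show ?thesis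
    by (simp add: sum.swap[of _ A])
qed

lemma sum_degree_eq_twice_card:
  assumes "graph V E"
  shows "(\<Sum>v\<in>V. degree E v) = 2 * card E"
proof -
  have "(\<Sum>v\<in>V. degree E v) = (\<Sum>e\<in>E. card (e \<inter> V))"
    using assms graph_finite_edges sum_degree_eq_sum_card_Int unfolding graph_def by blast
  also have "\<dots> = (\<Sum>e\<in>E. 2)"
    using assms unfolding graph_def by (intro sum.cong) (auto simp: Int_absorb2)
  finally show ?thesis by simp
qed

definition is_path :: "'a set \<Rightarrow> 'a set set \<Rightarrow> 'a list \<Rightarrow> bool" where
  "is_path V E ps \<longleftrightarrow> ps \<noteq> [] \<and> distinct ps \<and> set ps \<subseteq> V \<and>
     (\<forall>i < length ps - 1. {ps ! i, ps ! (i+1)} \<in> E)"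

lemma is_path_Cons:
  assumes "is_path V E ps" "w \<in> V" "w \<notin> set ps" "{w, hd ps} \<in> E"
  shows "is_path V E (w # ps)"
  unfolding is_path_def
proof (intro conjI allI impI)
  fix i assume "i < length (w # ps) - 1"
  then show "{(w # ps) ! i, (w # ps) ! (i + 1)} \<in> E"
    using assms by (cases i) (auto simp: is_path_def hd_conv_nth)
qed (use assms in \<open>auto simp: is_path_def\<close>)

lemma length_is_path_le: "finite V \<Longrightarrow> is_path V E ps \<Longrightarrow> length ps \<le> card V"
  using card_mono[of V "set ps"] distinct_card[of ps] unfolding is_path_def by simp

lemma is_cycle_take_is_path:
  assumes ps: "is_path V E ps" and j: "2 \<le> j" "j < length ps" and "{ps ! j, hd ps} \<in> E"
  shows "is_cycle V E (take (Suc j) ps)"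
  unfolding is_cycle_def
proof (intro conjI)
  show "set (take (Suc j) ps) \<subseteq> V"
    using ps set_take_subset unfolding is_path_def by (metis order_trans)
  show "\<forall>i<length (take (Suc j) ps) - 1. {take (Suc j) ps ! i, take (Suc j) ps ! (i + 1)} \<in> E"
    using ps j unfolding is_path_def by auto
  have "last (take (Suc j) ps) = ps ! j"
    using j by (simp add: take_Suc_conv_app_nth)
  moreover have "hd (take (Suc j) ps) = hd ps"
    by (simp add: hd_take)
  ultimately show "{last (take (Suc j) ps), hd (take (Suc j) ps)} \<in> E"
    using assms by simp
qed (use ps j in \<open>auto simp: is_path_def\<close>)

lemma graph_edge_other_end:
  assumes "graph V E" "e \<in> E" "u \<in> e"
  obtains w where "e = {u, w}" "w \<noteq> u"
proof -
  obtain a b where ab: "e = {a, b}" "a \<noteq> b"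
    using graph_edgeE[OF assms(1,2)] by blast
  then have "e = {u, b} \<and> b \<noteq> u \<or> e = {u, a} \<and> a \<noteq> u"
    using assms(3) by (auto simp: insert_commute)
  then show ?thesis using that by blast
qed

lemma two_neighbours_if_degree_ge_2:
  assumes "graph V E" "2 \<le> degree E u"
  obtains w1 w2 where "w1 \<noteq> w2" "{u, w1} \<in> E" "{u, w2} \<in> E"
proof -
  obtain A where "A \<subseteq> {e\<in>E. u \<in> e}" "card A = 2"
    using assms(2) obtain_subset_with_card_n unfolding degree_def by meson
  then obtain e1 e2 where e: "e1 \<noteq> e2" "e1 \<in> E" "e2 \<in> E" "u \<in> e1" "u \<in> e2"
    by (auto simp: card_2_iff)
  obtain w1 w2 where "e1 = {u, w1}" "e2 = {u, w2}"
    using graph_edge_other_end[OF assms(1)] e by metis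
  then show ?thesis using that e by blast
qed

text \<open>Minimum degree 2 forces a cycle: a neighbour of the first vertex of a longest path, other than
  its successor, lies further along the path.\<close>
lemma forest_ex_degree_le_1:
  assumes G: "graph V E" and F: "forest V E" and "V \<noteq> {}"
  shows "\<exists>v\<in>V. degree E v \<le> 1"
proof (rule ccontr)
  assume "\<not> ?thesis"
  then have deg: "2 \<le> degree E v" if "v \<in> V" for v
    using that by fastforce
  obtain v0 where "v0 \<in> V" using \<open>V \<noteq> {}\<close> by blast
  then have "is_path V E [v0]" unfolding is_path_def by simp
  moreover have "\<forall>qs. is_path V E qs \<longrightarrow> length qs < card V + 1"
    using length_is_path_le G unfolding graph_def by (auto simp: less_Suc_eq_le)
  ultimately obtain ps where ps: "is_path V E ps"
    and longest: "\<And>qs. is_path V E qs \<Longrightarrow> length qs \<le> length ps"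
    using ex_has_greatest_nat[of "is_path V E" "[v0]" length "card V + 1"] by blast
  define u where "u = hd ps"
  have u: "u = ps ! 0" "u \<in> V"
    using ps unfolding u_def is_path_def by (auto simp: hd_conv_nth)
  have on_path: "\<exists>j<length ps. ps ! j = w" if "{u, w} \<in> E" for w
  proof (rule ccontr)
    assume "\<not> ?thesis"
    then have "w \<notin> set ps" by (auto simp: in_set_conv_nth)
    moreover have "w \<in> V" using that G unfolding graph_def by auto
    ultimately have "is_path V E (w # ps)"
      using is_path_Cons[OF ps] that by (simp add: u_def insert_commute)
    then show False using longest by fastforce
  qed
  obtain w1 w2 where w: "w1 \<noteq> w2" "{u, w1} \<in> E" "{u, w2} \<in> E"
    using two_neighbours_if_degree_ge_2[OF G deg[OF u(2)]] by blast
  then obtain w where wE: "{u, w} \<in> E" and not_succ: "1 < length ps \<Longrightarrow> w \<noteq> ps ! 1"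
    by (cases "w1 = ps ! 1") auto
  obtain j where j: "j < length ps" "ps ! j = w" using on_path[OF wE] by blast
  have "w \<noteq> u" using wE G by (auto elim: graph_edgeE)
  then have "j \<noteq> 0" using j u(1) by metis
  moreover have "j \<noteq> 1" using j not_succ by auto
  ultimately have "2 \<le> j" by linarith
  then have "is_cycle V E (take (Suc j) ps)"
    using is_cycle_take_is_path[OF ps _ j(1)] j wE by (simp add: u_def insert_commute)
  then show False using F unfolding forest_def by blast
qed

lemma forest_card_edges_less:
  assumes "graph V E" "forest V E" "V \<noteq> {}"
  shows "card E < card V"
  using assms
proof (induction "card V" arbitrary: V E rule: less_induct)
  case less
  obtain v where v: "v \<in> V" "degree E v \<le> 1"
    using forest_ex_degree_le_1[OF less.prems] by blast
  have fin: "finite V" using less.prems(1) unfolding graph_def by simp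
  show ?case
  proof (cases "V = {v}")
    case True
    then have "E = {}"
      using less.prems(1) by (auto elim: graph_edgeE)
    then show ?thesis using True by simp
  next
    case False
    have "card (V - {v}) < card V" using card_Diff1_less[OF fin v(1)] .
    moreover have "V - {v} \<noteq> {}" using False v by blast
    ultimately have "card (del_vertices E {v}) < card (V - {v})"
      using less.hyps graph_del_vertices[OF less.prems(1)] forest_del_vertices[OF less.prems(2)]
      by blast
    moreover have "card {e\<in>E. e \<inter> {v} \<noteq> {}} = degree E v"
      unfolding degree_def by (intro arg_cong[where f = card]) auto
    ultimately show ?thesis
      using card_del_vertices_add[OF graph_finite_edges[OF less.prems(1)], of "{v}"] v fin
      by (simp add: card_Diff_singleton)
  qed
qed

lemma forest_independent_degree_two_card_less:
  assumes G: "graph V E" and F: "forest V E" and "V \<noteq> {}"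
    and T: "T \<subseteq> V" "\<forall>v\<in>T. degree E v = 2" and independent: "\<forall>e\<in>E. \<not> e \<subseteq> T"
  shows "2 * card T < card V"
proof -
  define ET where "ET = {e\<in>E. e \<inter> T \<noteq> {}}"
  have "ET \<subseteq> E" unfolding ET_def by blast
  then have card_ET: "card ET < card V"
    using forest_card_edges_less graph_subset_edges[OF G] forest_subset_edges[OF F] \<open>V \<noteq> {}\<close>
    by blast
  have finT: "finite T" using T(1) G finite_subset unfolding graph_def by blast
  have finET: "finite ET" using graph_finite_edges[OF G] unfolding ET_def by simp
  have "degree ET v = degree E v" if "v \<in> T" for v
    unfolding degree_def ET_def using that by (intro arg_cong[where f = card]) blast
  then have "2 * card T = (\<Sum>v\<in>T. degree ET v)"
    using T(2) by simp
  also have "\<dots> = (\<Sum>e\<in>ET. card (e \<inter> T))"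
    using sum_degree_eq_sum_card_Int[OF finT finET] .
  also have "\<dots> = (\<Sum>e\<in>ET. 1)"
  proof (rule sum.cong)
    fix e assume e: "e \<in> ET"
    then have "e \<in> E" unfolding ET_def by simp
    then obtain a b where ab: "e = {a, b}" "a \<noteq> b"
      using graph_edgeE[OF G] by blast
    with e independent have "e \<inter> T = {a} \<or> e \<inter> T = {b}"
      unfolding ET_def by auto
    then show "card (e \<inter> T) = 1" by auto
  qed simp
  finally show ?thesis using card_ET by simp
qed

lemma sum_degree_crossing_edges_le:
  assumes G: "graph V E"
  shows "(\<Sum>v\<in>V - X. degree {e\<in>E. e \<inter> X \<noteq> {}} v) \<le> card {e\<in>E. e \<inter> X \<noteq> {}}"
proof -
  let ?C = "{e\<in>E. e \<inter> X \<noteq> {}}"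
  have "(\<Sum>v\<in>V - X. degree ?C v) = (\<Sum>e\<in>?C. card (e \<inter> (V - X)))"
    using G graph_finite_edges[OF G] by (intro sum_degree_eq_sum_card_Int) (auto simp: graph_def)
  also have "\<dots> \<le> (\<Sum>e\<in>?C. 1)"
  proof (rule sum_mono)
    fix e assume e: "e \<in> ?C"
    then have "e \<inter> (V - X) \<subset> e" by blast
    moreover have "card e = 2" using e G unfolding graph_def by auto
    ultimately show "card (e \<inter> (V - X)) \<le> 1"
      using psubset_card_mono[of e "e \<inter> (V - X)"] card.infinite by fastforce
  qed
  finally show ?thesis by simp
qed

lemma card_del_vertices_less_four_crossing:
  assumes G: "graph V E" and R: "propR V E" and fvs: "feedback_vertex_set V E X"
    and "V - X \<noteq> {}"
  shows "card (del_vertices E X) < 4 * card {e\<in>E. e \<inter> X \<noteq> {}}"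
proof -
  define W where "W = V - X"
  define F where "F = del_vertices E X"
  define C where "C = {e\<in>E. e \<inter> X \<noteq> {}}"
  define T where "T = {v\<in>W. degree E v = 2 \<and> degree F v = 2}"
  have GF: "graph W F" and FF: "forest W F" and "W \<noteq> {}"
    using G fvs \<open>V - X \<noteq> {}\<close> graph_del_vertices
    unfolding W_def F_def feedback_vertex_set_def by auto
  have finW: "finite W" and "T \<subseteq> W"
    using GF unfolding graph_def T_def by auto
  have card_F: "card F < card W"
    using forest_card_edges_less[OF GF FF \<open>W \<noteq> {}\<close>] .
  have "\<forall>e\<in>F. \<not> e \<subseteq> T"
  proof
    fix e assume "e \<in> F"
    then obtain a b where "e = {a, b}" "a \<in> V" "b \<in> V" "e \<in> E"
      using G unfolding F_def del_vertices_def by (auto elim: graph_edgeE)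
    then show "\<not> e \<subseteq> T" using R unfolding propR_def T_def by auto
  qed
  then have card_T: "2 * card T < card W"
    using forest_independent_degree_two_card_less[OF GF FF \<open>W \<noteq> {}\<close> \<open>T \<subseteq> W\<close>]
    unfolding T_def by blast
  have "6 \<le> 4 * degree C v + 2 * degree F v + (if v \<in> T then 2 else 0)" if "v \<in> W" for v
    using degree_del_vertices_add[OF graph_finite_edges[OF G], of X v] R that
    unfolding propR_def W_def C_def F_def T_def by fastforce
  then have "(\<Sum>v\<in>W. 6) \<le> (\<Sum>v\<in>W. 4 * degree C v + 2 * degree F v + (if v \<in> T then 2 else 0))"
    by (rule sum_mono)
  also have "\<dots> = 4 * (\<Sum>v\<in>W. degree C v) + 2 * (\<Sum>v\<in>W. degree F v) + 2 * card T"
    using finW \<open>T \<subseteq> W\<close> by (simp add: sum.distrib sum_distrib_left sum.If_cases Int_absorb1)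
  also have "\<dots> \<le> 4 * card C + 4 * card F + 2 * card T"
    using sum_degree_crossing_edges_le[OF G, of X] sum_degree_eq_twice_card[OF GF]
    unfolding W_def C_def by simp
  finally show ?thesis
    using card_F card_T unfolding F_def C_def by simp
qed

theorem lemma7:
  fixes V :: "'a set" and E :: "'a set set" and X :: "'a set"
  assumes "graph V E" and "V \<noteq> {}" and "propR V E"
    and "feedback_vertex_set V E X"
  shows "real (card {e\<in>E. e \<inter> X \<noteq> {}}) > real (card E) / 5"
proof -
  have "card E < 5 * card {e\<in>E. e \<inter> X \<noteq> {}}"
  proof (cases "V - X = {}")
    case True
    then have "{e\<in>E. e \<inter> X \<noteq> {}} = E"
      using assms(1) by (fastforce elim: graph_edgeE)
    moreover obtain v where "v \<in> V" using assms(2) by blast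
    then have "0 < degree E v"
      using assms(3) unfolding propR_def by fastforce
    then have "E \<noteq> {}" unfolding degree_def by auto
    ultimately show ?thesis
      using graph_finite_edges[OF assms(1)] by (simp add: card_gt_0_iff)
  next
    case False
    then show ?thesis
      using card_del_vertices_less_four_crossing[OF assms(1,3,4)]
        card_del_vertices_add[OF graph_finite_edges[OF assms(1)], of X]
      by linarith
  qed
  then show ?thesis by simp
qed

end
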